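(* Let $\mathcal{C}=\mathsf{CSS}(A,B)$ be a CSS code on $n$ qubits and let $U=\bigotimes_{i=1}^n U_i$ be a $1$-local Clifford circuit with each $U_i\in\{I,P,HP,PH,PHP,H\}$. If $U$ is a logical operator of $\mathcal{C}$, then for each $h\in\{U_{HP},U_{PH},U_H\}$ that is non-empty and a proper subset of $\{1,\dots,n\}$, the code $\mathcal{C}$ splits on $h$.
   Context: A CSS code $\mathsf{CSS}(A,B)$ on $n$ qubits is given by subspaces $A,B\subseteq\mathbb{F}_2^n$ with $a\cdot b=0$ for all $a\in A,b\in B$; its codespace is the common $+1$-eigenspace of $X^a$ ($a\in A$) and $Z^b$ ($b\in B$), where $G^a=\bigotimes_{i:a_i=1}G_i$. A logical operator is a unitary preserving the codespace. $P=\mathrm{diag}(1,i)$, $H$ is Hadamard. For a set $K$ of single-qubit gates, $U_K=\{i: U_i\in K\}$, and $U_G=U_{\{G\}}$. A subspace $A$ splits on a non-empty $h\subsetneq\{1,\dots,n\}$ if $A=A_1\oplus A_2$ with $A_1$ having support $h$ and $A_2$ supported on the complement of $h$; the code splits on $h$ if both $A$ and $B$ split on $h$. *)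

theory Defs
  imports Complex_Main
begin

text \<open>Qubits are indexed by 0..n-1. Vectors of F_2^n and computational basis
  strings are both represented as functions nat => bool vanishing from index n on.\<close>

definition bvecs :: "nat \<Rightarrow> (nat \<Rightarrow> bool) set" where
  "bvecs n = {x. \<forall>i\<ge>n. \<not> x i}"

definition bxor :: "(nat \<Rightarrow> bool) \<Rightarrow> (nat \<Rightarrow> bool) \<Rightarrow> (nat \<Rightarrow> bool)" where
  "bxor a b = (\<lambda>i. a i \<noteq> b i)"

definition bsupp :: "nat \<Rightarrow> (nat \<Rightarrow> bool) \<Rightarrow> nat set" where
  "bsupp n a = {i. i < n \<and> a i}"

definition bdot :: "nat \<Rightarrow> (nat \<Rightarrow> bool) \<Rightarrow> (nat \<Rightarrow> bool) \<Rightarrow> bool" where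
  "bdot n a b = odd (card {i. i < n \<and> a i \<and> b i})"

definition f2_subspace :: "nat \<Rightarrow> (nat \<Rightarrow> bool) set \<Rightarrow> bool" where
  "f2_subspace n A \<longleftrightarrow> A \<subseteq> bvecs n \<and> (\<lambda>_. False) \<in> A \<and>
     (\<forall>a\<in>A. \<forall>b\<in>A. bxor a b \<in> A)"

type_synonym state = "(nat \<Rightarrow> bool) \<Rightarrow> complex"

definition states :: "nat \<Rightarrow> state set" where
  "states n = {f. \<forall>x. x \<notin> bvecs n \<longrightarrow> f x = 0}"

definition Xop :: "(nat \<Rightarrow> bool) \<Rightarrow> state \<Rightarrow> state" where
  "Xop a f = (\<lambda>y. f (bxor y a))"

definition Zop :: "nat \<Rightarrow> (nat \<Rightarrow> bool) \<Rightarrow> state \<Rightarrow> state" where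
  "Zop n b f = (\<lambda>y. (-1) ^ card {i. i < n \<and> b i \<and> y i} * f y)"

definition codespace :: "nat \<Rightarrow> (nat \<Rightarrow> bool) set \<Rightarrow> (nat \<Rightarrow> bool) set \<Rightarrow> state set" where
  "codespace n A B = {f \<in> states n. (\<forall>a\<in>A. Xop a f = f) \<and> (\<forall>b\<in>B. Zop n b f = f)}"

text \<open>Single-qubit gates as 2x2 matrices, g out in, with False = |0>, True = |1>.\<close>
type_synonym gate = "bool \<Rightarrow> bool \<Rightarrow> complex"

definition gmult :: "gate \<Rightarrow> gate \<Rightarrow> gate" where
  "gmult g k = (\<lambda>x y. \<Sum>z\<in>UNIV. g x z * k z y)"

definition gI :: gate where "gI = (\<lambda>x y. if x = y then 1 else 0)"
definition gP :: gate where "gP = (\<lambda>x y. if x = y then (if x then \<i> else 1) else 0)"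
definition gH :: gate where
  "gH = (\<lambda>x y. (if x \<and> y then -1 else 1) / complex_of_real (sqrt 2))"
definition gHP :: gate where "gHP = gmult gH gP"
definition gPH :: gate where "gPH = gmult gP gH"
definition gPHP :: gate where "gPHP = gmult gP (gmult gH gP)"

definition local_op :: "nat \<Rightarrow> (nat \<Rightarrow> gate) \<Rightarrow> state \<Rightarrow> state" where
  "local_op n U f = (\<lambda>y. if y \<in> bvecs n
      then (\<Sum>x\<in>bvecs n. (\<Prod>i<n. U i (y i) (x i)) * f x) else 0)"

definition logical_op :: "nat \<Rightarrow> (nat \<Rightarrow> bool) set \<Rightarrow> (nat \<Rightarrow> bool) set \<Rightarrow> (state \<Rightarrow> state) \<Rightarrow> bool" where
  "logical_op n A B V \<longleftrightarrow> V ` codespace n A B = codespace n A B"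

definition gate_set :: "nat \<Rightarrow> (nat \<Rightarrow> gate) \<Rightarrow> gate set \<Rightarrow> nat set" where
  "gate_set n U K = {i. i < n \<and> U i \<in> K}"

definition subspace_splits :: "nat \<Rightarrow> (nat \<Rightarrow> bool) set \<Rightarrow> nat set \<Rightarrow> bool" where
  "subspace_splits n A h \<longleftrightarrow> (\<exists>A1 A2. f2_subspace n A1 \<and> f2_subspace n A2 \<and>
      (\<forall>a\<in>A1. bsupp n a \<subseteq> h) \<and> (\<forall>a\<in>A2. bsupp n a \<subseteq> {0..<n} - h) \<and>
      A1 \<inter> A2 = {\<lambda>_. False} \<and>
      A = {bxor a1 a2 | a1 a2. a1 \<in> A1 \<and> a2 \<in> A2})"

definition code_splits :: "nat \<Rightarrow> (nat \<Rightarrow> bool) set \<Rightarrow> (nat \<Rightarrow> bool) set \<Rightarrow> nat set \<Rightarrow> bool" where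
  "code_splits n A B h \<longleftrightarrow> subspace_splits n A h \<and> subspace_splits n B h"

end

theory Submission
  imports Defs
begin

text \<open>Conjugation by a 1-local Clifford circuit U maps Pauli operators to Pauli operators up to a
  phase, qubit by qubit according to the table of the six gates. If U is logical, then U X^a U^-1 and
  U Z^b U^-1 (a \<in> A, b \<in> B) fix every codeword, and a Pauli operator fixing every codeword lies
  in the stabilizer: its X-part is in A and its Z-part in B (test it on the indicators of A and of
  the orthogonal complement of B, and use that B is its own double complement). Read through the
  table, this says that restricting a \<in> A or b \<in> B to the qubits carrying certain sets of gates
  stays in A, resp. B. Composing these restrictions isolates the qubits U_HP, U_PH and U_H, so A and
  B are closed under restriction to each of them, which is exactly splitting.\<close>

lemma bxor_bxor_cancel [simp]: "bxor (bxor y a) a = y"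
  by (auto simp: bxor_def)

lemma bxor_in_bvecs: "y \<in> bvecs n \<Longrightarrow> a \<in> bvecs n \<Longrightarrow> bxor y a \<in> bvecs n"
  by (simp add: bxor_def bvecs_def)

lemma bvecs_SucD: "x \<in> bvecs (Suc n) \<Longrightarrow> \<not> x n \<Longrightarrow> x \<in> bvecs n"
  by (auto simp: bvecs_def) (metis le_antisym not_less_eq_eq)

lemma bvecs_mono: "bvecs n \<subseteq> bvecs (Suc n)"
  by (auto simp: bvecs_def)

lemma f2_subspace_zero: "f2_subspace n A \<Longrightarrow> (\<lambda>_. False) \<in> A"
  and f2_subspace_bxor: "f2_subspace n A \<Longrightarrow> a \<in> A \<Longrightarrow> b \<in> A \<Longrightarrow> bxor a b \<in> A"
  and f2_subspace_bvecs: "f2_subspace n A \<Longrightarrow> a \<in> A \<Longrightarrow> a \<in> bvecs n"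
  by (auto simp: f2_subspace_def)

lemma bdot_0 [simp]: "\<not> bdot 0 a b"
  by (simp add: bdot_def)

lemma bdot_Suc: "bdot (Suc n) a b \<longleftrightarrow> bdot n a b \<noteq> (a n \<and> b n)"
proof -
  have "{i. i < Suc n \<and> a i \<and> b i} =
      (if a n \<and> b n then insert n else id) {i. i < n \<and> a i \<and> b i}"
    by (auto simp: less_Suc_eq)
  then show ?thesis
    by (simp add: bdot_def)
qed

lemma bdot_commute: "bdot n a b = bdot n b a"
  by (induction n) (auto simp: bdot_Suc)

lemma bdot_bxor_left: "bdot n (bxor a b) c \<longleftrightarrow> bdot n a c \<noteq> bdot n b c"
  by (induction n) (auto simp: bdot_Suc bxor_def)

lemma bdot_bxor_right: "bdot n c (bxor a b) \<longleftrightarrow> bdot n c a \<noteq> bdot n c b"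
  using bdot_bxor_left bdot_commute by metis

lemma bdot_zero_right [simp]: "\<not> bdot n a (\<lambda>_. False)"
  by (simp add: bdot_def)

lemma bdot_cong:
  "(\<And>i. i < n \<Longrightarrow> a i = a' i) \<Longrightarrow> (\<And>i. i < n \<Longrightarrow> b i = b' i) \<Longrightarrow> bdot n a b = bdot n a' b'"
  by (induction n) (auto simp: bdot_Suc)

lemma minus_one_power_bdot:
  "(-1 :: complex) ^ card {i. i < n \<and> a i \<and> b i} = (if bdot n a b then -1 else 1)"
  by (simp add: bdot_def minus_one_power_iff)

definition bperp :: "nat \<Rightarrow> (nat \<Rightarrow> bool) set \<Rightarrow> (nat \<Rightarrow> bool) set" where
  "bperp n B = {y \<in> bvecs n. \<forall>b\<in>B. \<not> bdot n b y}"

lemma f2_subspace_Suc_filter: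
  assumes "f2_subspace (Suc n) B"
  shows "f2_subspace n {b \<in> B. \<not> b n}"
  using assms unfolding f2_subspace_def
  by (auto intro: bvecs_SucD) (simp add: bxor_def)

lemma exists_bperp_separating:
  assumes "f2_subspace n B" "d \<in> bvecs n" "d \<notin> B"
  shows "\<exists>y\<in>bperp n B. bdot n d y"
  using assms
proof (induction n arbitrary: B d)
  case 0
  then have "d = (\<lambda>_. False)"
    by (auto simp: bvecs_def)
  with 0 show ?case
    by (simp add: f2_subspace_zero)
next
  case (Suc n)
  show ?case
  proof (cases "\<exists>b0\<in>B. b0 n")
    case False
    then have "B = {b \<in> B. \<not> b n}"
      by blast
    then have "f2_subspace n B"
      using f2_subspace_Suc_filter[OF Suc.prems(1)] by simp
    show ?thesis
    proof (cases "d n")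
      case True
      define y where "y = (\<lambda>i. i = n)"
      have "bdot n v y = bdot n v (\<lambda>_. False)" for v
        by (rule bdot_cong) (simp_all add: y_def)
      then have bdot_y: "bdot (Suc n) v y \<longleftrightarrow> v n" for v
        by (simp add: bdot_Suc y_def)
      have "y \<in> bvecs (Suc n)"
        by (simp add: bvecs_def y_def)
      then have "y \<in> bperp (Suc n) B"
        using False by (simp add: bperp_def bdot_y)
      with True bdot_y[of d] show ?thesis
        by blast
    next
      case False
      have "d \<in> bvecs n"
        using Suc.prems(2) False by (rule bvecs_SucD)
      then obtain y where "y \<in> bperp n B" "bdot n d y"
        using Suc.IH \<open>f2_subspace n B\<close> Suc.prems(3) by blast
      moreover have "\<not> y n"
        using \<open>y \<in> bperp n B\<close> by (simp add: bperp_def bvecs_def)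
      ultimately show ?thesis
        using bvecs_mono by (auto simp: bperp_def bdot_Suc)
    qed
  next
    case True
    then obtain b0 where b0: "b0 \<in> B" "b0 n"
      by blast
    \<comment> \<open>Gaussian elimination of coordinate n against the pivot b0.\<close>
    define pr where "pr v = (if v n then bxor v b0 else v)" for v
    define B' where "B' = {b \<in> B. \<not> b n}"
    have "f2_subspace n B'"
      unfolding B'_def using Suc.prems(1) by (rule f2_subspace_Suc_filter)
    have pr_n: "\<not> pr v n" for v
      using b0 by (simp add: pr_def bxor_def)
    have pr_B': "pr b \<in> B'" if "b \<in> B" for b
      using that b0 pr_n Suc.prems(1) by (simp add: B'_def pr_def f2_subspace_bxor)
    have "pr d \<in> bvecs (Suc n)"
      using Suc.prems(1,2) b0 by (simp add: pr_def bxor_in_bvecs f2_subspace_bvecs)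
    then have "pr d \<in> bvecs n"
      using pr_n by (rule bvecs_SucD)
    moreover have "pr d \<notin> B'"
      using Suc.prems(1,3) b0 f2_subspace_bxor[of "Suc n" B "bxor d b0" b0]
      by (auto simp: B'_def pr_def)
    ultimately obtain y' where y': "y' \<in> bperp n B'" "bdot n (pr d) y'"
      using Suc.IH \<open>f2_subspace n B'\<close> by blast
    define y where "y = y'(n := bdot n b0 y')"
    have "bdot n v y = bdot n v y'" for v
      by (rule bdot_cong) (auto simp: y_def)
    then have bdot_y: "bdot (Suc n) v y = bdot n (pr v) y'" for v
      by (simp add: bdot_Suc pr_def bdot_bxor_left y_def)
    have "y \<in> bvecs (Suc n)"
      using y'(1) by (auto simp: bperp_def bvecs_def y_def)
    then have "y \<in> bperp (Suc n) B"
      using y'(1) pr_B' by (auto simp: bperp_def bdot_y)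
    with y'(2) bdot_y show ?thesis
      by auto
  qed
qed

lemma bperp_bperp:
  assumes "f2_subspace n B"
  shows "bperp n (bperp n B) = B"
proof
  show "bperp n (bperp n B) \<subseteq> B"
  proof
    fix d assume d: "d \<in> bperp n (bperp n B)"
    show "d \<in> B"
    proof (rule ccontr)
      assume "d \<notin> B"
      moreover have "d \<in> bvecs n"
        using d by (simp add: bperp_def)
      ultimately obtain y where y: "y \<in> bperp n B" "bdot n d y"
        using exists_bperp_separating[OF assms] by blast
      have "\<not> bdot n y d"
        using d y(1) by (simp add: bperp_def)
      with y(2) show False
        by (metis bdot_commute)
    qed
  qed
  show "B \<subseteq> bperp n (bperp n B)"
  proof
    fix b assume "b \<in> B"
    then show "b \<in> bperp n (bperp n B)"
      using assms by (auto simp: bperp_def f2_subspace_bvecs) (metis bdot_commute)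
  qed
qed

lemma f2_subspace_bxor_iff: "f2_subspace n S \<Longrightarrow> a \<in> S \<Longrightarrow> bxor y a \<in> S \<longleftrightarrow> y \<in> S"
  using f2_subspace_bxor[of n S _ a] by (metis bxor_bxor_cancel)

lemma f2_subspace_bperp: "f2_subspace n (bperp n B)"
  unfolding f2_subspace_def bperp_def
  by (auto simp: bxor_in_bvecs bdot_bxor_right) (simp add: bvecs_def)

lemma prod_sign_eq_minus_one_power:
  "(\<Prod>i<n. if P i then -1 else 1 :: complex) = (-1) ^ card {i. i < (n :: nat) \<and> P i}"
  using prod.inter_filter[of "{..<n}" "\<lambda>_. -1 :: complex" P] by simp

lemma sum_bvecs_bxor_reindex:
  "a \<in> bvecs n \<Longrightarrow> (\<Sum>x\<in>bvecs n. F x) = (\<Sum>x\<in>bvecs n. F (bxor x a))"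
  by (rule sum.reindex_bij_witness[where i = "\<lambda>x. bxor x a" and j = "\<lambda>x. bxor x a"])
    (auto intro: bxor_in_bvecs)

text \<open>pauli n \<kappa> c d is the n-qubit Pauli operator \<kappa> Z^d X^c.\<close>

definition pauli :: "nat \<Rightarrow> complex \<Rightarrow> (nat \<Rightarrow> bool) \<Rightarrow> (nat \<Rightarrow> bool) \<Rightarrow> state \<Rightarrow> state" where
  "pauli n \<kappa> c d f = (\<lambda>y. if y \<in> bvecs n
     then \<kappa> * (-1) ^ card {i. i < n \<and> d i \<and> y i} * f (bxor y c) else 0)"

lemma pauli_stabilizer_fixes_codespace:
  assumes "a \<in> A" "b \<in> B" "f \<in> codespace n A B"
  shows "pauli n 1 a b f = f"
proof
  fix y
  have "Xop a f y = f y" "Zop n b f y = f y"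
    using assms by (auto simp: codespace_def)
  moreover have "f y = 0" if "y \<notin> bvecs n"
    using assms(3) that by (simp add: codespace_def states_def)
  ultimately show "pauli n 1 a b f y = f y"
    by (auto simp: pauli_def Xop_def Zop_def)
qed

lemma indicator_in_codespace:
  assumes "f2_subspace n S" "A \<subseteq> S" "S \<subseteq> bperp n B"
  shows "(\<lambda>y. of_bool (y \<in> S)) \<in> codespace n A B"
  unfolding codespace_def
proof (intro CollectI conjI ballI)
  show "(\<lambda>y. of_bool (y \<in> S)) \<in> states n"
    using assms(3) by (auto simp: states_def bperp_def)
next
  fix a assume "a \<in> A"
  then show "Xop a (\<lambda>y. of_bool (y \<in> S)) = (\<lambda>y. of_bool (y \<in> S))"
    using assms(1,2) f2_subspace_bxor_iff by (auto simp: Xop_def fun_eq_iff)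
next
  fix b assume "b \<in> B"
  then show "Zop n b (\<lambda>y. of_bool (y \<in> S)) = (\<lambda>y. of_bool (y \<in> S))"
    using assms(3) by (auto simp: Zop_def fun_eq_iff minus_one_power_bdot bperp_def)
qed

lemma pauli_fixing_codespace_in_stabilizer:
  assumes A: "f2_subspace n A" and B: "f2_subspace n B"
    and orth: "\<forall>a\<in>A. \<forall>b\<in>B. \<not> bdot n a b"
    and c: "c \<in> bvecs n" and d: "d \<in> bvecs n"
    and fixed: "\<And>f. f \<in> codespace n A B \<Longrightarrow> pauli n \<kappa> c d f = f"
  shows "c \<in> A \<and> d \<in> B"
proof -
  have A_perp: "A \<subseteq> bperp n B"
    using A orth by (auto simp: bperp_def bdot_commute f2_subspace_bvecs)
  have zero: "(\<lambda>_. False) \<in> bvecs n"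
    by (simp add: bvecs_def)
  have "bxor (\<lambda>_. False) v = v" for v
    by (simp add: bxor_def)
  then have at_zero: "\<kappa> * f c = f (\<lambda>_. False)" if "f \<in> codespace n A B" for f
    using fun_cong[OF fixed[OF that], of "\<lambda>_. False"] zero by (simp add: pauli_def)
  \<comment> \<open>The indicators of A and of bperp n B are codewords; evaluating the fixed-point
    equation on them gives c \<in> A, \<kappa> = 1, and d orthogonal to bperp n B.\<close>
  have code_A: "(\<lambda>y. of_bool (y \<in> A)) \<in> codespace n A B"
    by (rule indicator_in_codespace[OF A subset_refl A_perp])
  have code_perp: "(\<lambda>y. of_bool (y \<in> bperp n B)) \<in> codespace n A B"
    by (rule indicator_in_codespace[OF f2_subspace_bperp A_perp subset_refl])
  have "c \<in> A"
    using at_zero[OF code_A] f2_subspace_zero[OF A] by (simp add: of_bool_def split: if_splits)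
  then have "c \<in> bperp n B"
    using A_perp by blast
  then have "\<kappa> = 1"
    using at_zero[OF code_perp] f2_subspace_zero[OF f2_subspace_bperp] by simp
  have "\<not> bdot n d y" if y: "y \<in> bperp n B" for y
  proof -
    have "bxor y c \<in> bperp n B"
      using f2_subspace_bxor[OF f2_subspace_bperp y \<open>c \<in> bperp n B\<close>] .
    then have "(-1 :: complex) ^ card {i. i < n \<and> d i \<and> y i} = 1"
      using fun_cong[OF fixed[OF code_perp], of y] y \<open>\<kappa> = 1\<close>
      by (simp add: pauli_def bperp_def)
    then show ?thesis
      by (simp add: minus_one_power_bdot split: if_splits)
  qed
  then have "d \<in> bperp n (bperp n B)"
    using d by (auto simp: bperp_def bdot_commute)
  with \<open>c \<in> A\<close> show ?thesis
    using bperp_bperp[OF B] by blast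
qed

lemma local_op_pauli:
  assumes a: "a \<in> bvecs n" and c: "c \<in> bvecs n"
    and conj: "\<And>i y x. i < n \<Longrightarrow> U i y (x \<noteq> a i) * (if b i \<and> (x \<noteq> a i) then -1 else 1)
                 = \<phi> i * (if d i \<and> y then -1 else 1) * U i (y \<noteq> c i) x"
  shows "local_op n U (pauli n 1 a b f) = pauli n (\<Prod>i<n. \<phi> i) c d (local_op n U f)"
proof
  fix y
  show "local_op n U (pauli n 1 a b f) y = pauli n (\<Prod>i<n. \<phi> i) c d (local_op n U f) y"
  proof (cases "y \<in> bvecs n")
    case False
    then show ?thesis
      by (simp add: local_op_def pauli_def)
  next
    case True
    have factor: "(\<Prod>i<n. U i (y i) (x i \<noteq> a i) * (if b i \<and> (x i \<noteq> a i) then -1 else 1))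
        = (\<Prod>i<n. \<phi> i * (if d i \<and> y i then -1 else 1) * U i (y i \<noteq> c i) (x i))" for x
      by (rule prod.cong[OF refl], rule conj, simp)
    have "local_op n U (pauli n 1 a b f) y =
        (\<Sum>x\<in>bvecs n. (\<Prod>i<n. U i (y i) (x i)) * (-1) ^ card {i. i < n \<and> b i \<and> x i} * f (bxor x a))"
      using True by (simp add: local_op_def pauli_def mult.assoc)
    also have "\<dots> = (\<Sum>x\<in>bvecs n. (\<Prod>i<n. U i (y i) (x i \<noteq> a i)
        * (if b i \<and> (x i \<noteq> a i) then -1 else 1)) * f x)"
      by (subst sum_bvecs_bxor_reindex[OF a])
        (simp only: bxor_bxor_cancel, simp add: bxor_def prod.distrib prod_sign_eq_minus_one_power)
    also have "\<dots> = (\<Sum>x\<in>bvecs n. (\<Prod>i<n. \<phi> i * (if d i \<and> y i then -1 else 1)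
        * U i (y i \<noteq> c i) (x i)) * f x)"
      by (simp only: factor)
    also have "\<dots> = pauli n (\<Prod>i<n. \<phi> i) c d (local_op n U f) y"
      using True bxor_in_bvecs[OF True c]
      by (simp add: local_op_def pauli_def sum_distrib_left prod.distrib prod_sign_eq_minus_one_power
          bxor_def mult.assoc)
    finally show ?thesis .
  qed
qed

definition brestrict :: "(nat \<Rightarrow> bool) \<Rightarrow> nat set \<Rightarrow> (nat \<Rightarrow> bool)" where
  "brestrict v h = (\<lambda>i. v i \<and> i \<in> h)"

lemma brestrict_in_bvecs: "h \<subseteq> {..<n} \<Longrightarrow> brestrict v h \<in> bvecs n"
  by (auto simp: brestrict_def bvecs_def)

lemma gate_set_subset: "gate_set n U K \<subseteq> {..<n}"
  by (auto simp: gate_set_def)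

lemma brestrict_gate_set_bit:
  "i < n \<Longrightarrow> brestrict v (gate_set n U K) i \<longleftrightarrow> v i \<and> U i \<in> K"
  by (simp add: brestrict_def gate_set_def)

lemma brestrict_brestrict_gate_set:
  "brestrict (brestrict v (gate_set n U K)) (gate_set n U L) = brestrict v (gate_set n U (K \<inter> L))"
  by (auto simp: brestrict_def gate_set_def)

lemma brestrict_gate_set_insert:
  "g \<notin> K \<Longrightarrow> brestrict v (gate_set n U (insert g K))
     = bxor (brestrict v (gate_set n U {g})) (brestrict v (gate_set n U K))"
  by (auto simp: brestrict_def gate_set_def bxor_def)

lemma subspace_splits_if_brestrict_closed:
  assumes A: "f2_subspace n A" and closed: "\<And>a. a \<in> A \<Longrightarrow> brestrict a h \<in> A"
  shows "subspace_splits n A h"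
proof -
  define A1 where "A1 = {a \<in> A. \<forall>i. a i \<longrightarrow> i \<in> h}"
  define A2 where "A2 = {a \<in> A. \<forall>i. a i \<longrightarrow> i \<notin> h}"
  have "f2_subspace n A1" "f2_subspace n A2"
    using A by (auto simp: f2_subspace_def A1_def A2_def bxor_def)
  moreover have "\<forall>a\<in>A1. bsupp n a \<subseteq> h" "\<forall>a\<in>A2. bsupp n a \<subseteq> {0..<n} - h"
    by (auto simp: A1_def A2_def bsupp_def)
  moreover have "A1 \<inter> A2 = {\<lambda>_. False}"
    using f2_subspace_zero[OF A] by (auto simp: A1_def A2_def)
  moreover have "A = {bxor a1 a2 | a1 a2. a1 \<in> A1 \<and> a2 \<in> A2}"
  proof (intro equalityI subsetI)
    fix a assume a: "a \<in> A"
    then have "brestrict a h \<in> A"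
      by (rule closed)
    moreover from this have "bxor a (brestrict a h) \<in> A"
      by (rule f2_subspace_bxor[OF A a])
    ultimately have "brestrict a h \<in> A1" "bxor a (brestrict a h) \<in> A2"
      by (auto simp: A1_def A2_def brestrict_def bxor_def)
    moreover have "a = bxor (brestrict a h) (bxor a (brestrict a h))"
      by (auto simp: bxor_def)
    ultimately show "a \<in> {bxor a1 a2 | a1 a2. a1 \<in> A1 \<and> a2 \<in> A2}"
      by blast
  next
    fix a assume "a \<in> {bxor a1 a2 | a1 a2. a1 \<in> A1 \<and> a2 \<in> A2}"
    then show "a \<in> A"
      using f2_subspace_bxor[OF A] by (auto simp: A1_def A2_def)
  qed
  ultimately show ?thesis
    unfolding subspace_splits_def by blast
qed

lemma f2_subspace_brestrict_insert_iff:
  assumes "f2_subspace n S" "g \<notin> K" "brestrict v (gate_set n U K) \<in> S"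
  shows "brestrict v (gate_set n U (insert g K)) \<in> S \<longleftrightarrow> brestrict v (gate_set n U {g}) \<in> S"
  using brestrict_gate_set_insert[OF assms(2)] f2_subspace_bxor_iff[OF assms(1,3)] by simp

lemma gHP_entry: "gHP y x = (if y \<and> x then -1 else 1) * (if x then \<i> else 1) / complex_of_real (sqrt 2)"
  by (cases x; cases y; simp add: gHP_def gmult_def gH_def gP_def UNIV_bool)

lemma gPH_entry: "gPH y x = (if y then \<i> else 1) * (if y \<and> x then -1 else 1) / complex_of_real (sqrt 2)"
  by (cases x; cases y; simp add: gPH_def gmult_def gH_def gP_def UNIV_bool)

lemma gPHP_entry:
  "gPHP y x = (if y then \<i> else 1) * (if y \<and> x then -1 else 1) * (if x then \<i> else 1)
     / complex_of_real (sqrt 2)"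
  by (cases x; cases y; simp add: gPHP_def gmult_def gH_def gP_def UNIV_bool)

lemmas gate_entries = gI_def gP_def gH_def gHP_entry gPH_entry gPHP_entry

(* The reversed list supplies the symmetric disequations, which simp does not derive. *)
lemma distinct_gates:
  "distinct [gI, gP, gHP, gPH, gPHP, gH]" "distinct [gH, gPHP, gPH, gHP, gP, gI]"
  by (simp_all add: fun_eq_iff all_bool_eq gate_entries complex_eq_iff)

lemmas gates_distinct = distinct_gates[simplified]

text \<open>gate_conj G (a, b) (c, d): G P(a,b) = \<phi> P(c,d) G for a phase \<phi>, where the single-qubit
  Pauli matrix P(a,b) = Z^b X^a has entries P(a,b) z x = (-1)^(b z) [x = z + a].\<close>

fun gate_conj :: "gate \<Rightarrow> bool \<times> bool \<Rightarrow> bool \<times> bool \<Rightarrow> bool" where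
  "gate_conj G (a, b) (c, d) \<longleftrightarrow> (\<exists>\<phi>. \<forall>y x.
     G y (x \<noteq> a) * (if b \<and> (x \<noteq> a) then -1 else 1) = \<phi> * (if d \<and> y then -1 else 1) * G (y \<noteq> c) x)"

lemma gate_conj_X:
  assumes "G \<in> {gI, gP, gHP, gPH, gPHP, gH}"
  shows "gate_conj G (True, False) (G \<in> {gI, gP, gPHP, gHP}, G \<in> {gP, gH, gHP, gPH})"
  using assms
  by (elim insertE emptyE; simp add: gates_distinct)
    ((rule exI[of _ 1] exI[of _ \<i>] exI[of _ "-\<i>"], simp add: all_bool_eq gate_entries; fail)+)

lemma gate_conj_Z:
  assumes "G \<in> {gI, gP, gHP, gPH, gPHP, gH}"
  shows "gate_conj G (False, True) (G \<in> {gPHP, gH, gHP, gPH}, G \<in> {gI, gP, gPHP, gPH})"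
  using assms
  by (elim insertE emptyE; simp add: gates_distinct)
    ((rule exI[of _ 1] exI[of _ \<i>] exI[of _ "-\<i>"], simp add: all_bool_eq gate_entries; fail)+)

lemma gate_conj_id: "gate_conj G (False, False) (False, False)"
  by (auto intro: exI[of _ 1])

context
  fixes n :: nat and A B :: "(nat \<Rightarrow> bool) set" and U :: "nat \<Rightarrow> gate"
  assumes A: "f2_subspace n A" and B: "f2_subspace n B"
    and orth: "\<forall>a\<in>A. \<forall>b\<in>B. \<not> bdot n a b"
    and gates: "\<forall>i<n. U i \<in> {gI, gP, gHP, gPH, gPHP, gH}"
    and logical: "logical_op n A B (local_op n U)"
begin

lemma logical_conj_stabilizer:
  assumes "a \<in> A" "b \<in> B" "c \<in> bvecs n" "d \<in> bvecs n"
    and conj: "\<forall>i<n. gate_conj (U i) (a i, b i) (c i, d i)"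
  shows "c \<in> A \<and> d \<in> B"
proof -
  obtain \<phi> where \<phi>: "\<And>i y x. i < n \<Longrightarrow> U i y (x \<noteq> a i) * (if b i \<and> (x \<noteq> a i) then -1 else 1)
      = \<phi> i * (if d i \<and> y then -1 else 1) * U i (y \<noteq> c i) x"
  proof -
    have "\<forall>i. \<exists>\<phi>. i < n \<longrightarrow> (\<forall>y x. U i y (x \<noteq> a i) * (if b i \<and> (x \<noteq> a i) then -1 else 1)
        = \<phi> * (if d i \<and> y then -1 else 1) * U i (y \<noteq> c i) x)"
      using conj by simp
    from choice[OF this] show ?thesis
      using that by blast
  qed
  have a: "a \<in> bvecs n"
    using A assms(1) by (rule f2_subspace_bvecs)
  have "pauli n (\<Prod>i<n. \<phi> i) c d f = f" if "f \<in> codespace n A B" for f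
  proof -
    have "f \<in> local_op n U ` codespace n A B"
      using logical that by (simp add: logical_op_def)
    then obtain g where g: "g \<in> codespace n A B" "f = local_op n U g"
      by blast
    then have "pauli n (\<Prod>i<n. \<phi> i) c d f = local_op n U (pauli n 1 a b g)"
      using local_op_pauli[OF a assms(3) \<phi>] by simp
    also have "\<dots> = f"
      using pauli_stabilizer_fixes_codespace[OF assms(1,2) g(1)] g(2) by simp
    finally show ?thesis .
  qed
  then show ?thesis
    using pauli_fixing_codespace_in_stabilizer[OF A B orth assms(3,4)] by blast
qed

lemma logical_conj_X:
  assumes "a \<in> A"
  shows "brestrict a (gate_set n U {gI, gP, gPHP, gHP}) \<in> A"
    and "brestrict a (gate_set n U {gP, gH, gHP, gPH}) \<in> B"
proof -
  have conj: "gate_conj (U i) (a i, False)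
      (brestrict a (gate_set n U {gI, gP, gPHP, gHP}) i,
       brestrict a (gate_set n U {gP, gH, gHP, gPH}) i)"
    if "i < n" for i
    using that gates gate_conj_X gate_conj_id by (cases "a i") (simp_all add: brestrict_gate_set_bit)
  show "brestrict a (gate_set n U {gI, gP, gPHP, gHP}) \<in> A"
    and "brestrict a (gate_set n U {gP, gH, gHP, gPH}) \<in> B"
    using logical_conj_stabilizer[OF assms f2_subspace_zero[OF B]
        brestrict_in_bvecs[OF gate_set_subset] brestrict_in_bvecs[OF gate_set_subset]] conj
    by blast+
qed

lemma logical_conj_Z:
  assumes "b \<in> B"
  shows "brestrict b (gate_set n U {gPHP, gH, gHP, gPH}) \<in> A"
    and "brestrict b (gate_set n U {gI, gP, gPHP, gPH}) \<in> B"
proof -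
  have conj: "gate_conj (U i) (False, b i)
      (brestrict b (gate_set n U {gPHP, gH, gHP, gPH}) i,
       brestrict b (gate_set n U {gI, gP, gPHP, gPH}) i)"
    if "i < n" for i
    using that gates gate_conj_Z gate_conj_id by (cases "b i") (simp_all add: brestrict_gate_set_bit)
  show "brestrict b (gate_set n U {gPHP, gH, gHP, gPH}) \<in> A"
    and "brestrict b (gate_set n U {gI, gP, gPHP, gPH}) \<in> B"
    using logical_conj_stabilizer[OF f2_subspace_zero[OF A] assms
        brestrict_in_bvecs[OF gate_set_subset] brestrict_in_bvecs[OF gate_set_subset]] conj
    by blast+
qed

lemma logical_brestrict_A:
  assumes "a \<in> A" "g \<in> {gHP, gPH, gH}"
  shows "brestrict a (gate_set n U {g}) \<in> A"
proof -
  have H_HP_PH: "brestrict a (gate_set n U {gH, gHP, gPH}) \<in> A"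
    using logical_conj_Z(1)[OF logical_conj_X(2)[OF assms(1)]]
    by (simp add: brestrict_brestrict_gate_set gates_distinct)
  have "brestrict a (gate_set n U {gP, gPH}) \<in> B"
    using logical_conj_Z(2)[OF logical_conj_X(2)[OF assms(1)]]
    by (simp add: brestrict_brestrict_gate_set gates_distinct)
  from logical_conj_Z(1)[OF this] have PH_part: "brestrict a (gate_set n U {gPH}) \<in> A"
    by (simp add: brestrict_brestrict_gate_set gates_distinct)
  have HP_part: "brestrict a (gate_set n U {gHP}) \<in> A"
    using logical_conj_X(1)[OF H_HP_PH] by (simp add: brestrict_brestrict_gate_set gates_distinct)
  have "brestrict a (gate_set n U {gHP, gPH}) \<in> A"
    using f2_subspace_brestrict_insert_iff[OF A _ PH_part] HP_part by (simp add: gates_distinct)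
  then have "brestrict a (gate_set n U {gH}) \<in> A"
    using f2_subspace_brestrict_insert_iff[OF A] H_HP_PH by (simp add: gates_distinct)
  with PH_part HP_part assms(2) show ?thesis
    by auto
qed

lemma logical_brestrict_B:
  assumes "b \<in> B" "g \<in> {gHP, gPH, gH}"
  shows "brestrict b (gate_set n U {g}) \<in> B"
proof -
  have H_HP_PH: "brestrict b (gate_set n U {gH, gHP, gPH}) \<in> B"
    using logical_conj_X(2)[OF logical_conj_Z(1)[OF assms(1)]]
    by (simp add: brestrict_brestrict_gate_set gates_distinct)
  have "brestrict b (gate_set n U {gPHP, gHP}) \<in> A"
    using logical_conj_X(1)[OF logical_conj_Z(1)[OF assms(1)]]
    by (simp add: brestrict_brestrict_gate_set gates_distinct)
  from logical_conj_X(2)[OF this] have HP_part: "brestrict b (gate_set n U {gHP}) \<in> B"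
    by (simp add: brestrict_brestrict_gate_set gates_distinct)
  have PH_part: "brestrict b (gate_set n U {gPH}) \<in> B"
    using logical_conj_Z(2)[OF H_HP_PH] by (simp add: brestrict_brestrict_gate_set gates_distinct)
  have "brestrict b (gate_set n U {gHP, gPH}) \<in> B"
    using f2_subspace_brestrict_insert_iff[OF B _ PH_part] HP_part by (simp add: gates_distinct)
  then have "brestrict b (gate_set n U {gH}) \<in> B"
    using f2_subspace_brestrict_insert_iff[OF B] H_HP_PH by (simp add: gates_distinct)
  with PH_part HP_part assms(2) show ?thesis
    by auto
qed

end

theorem proposition7:
  fixes n :: nat and A B :: "(nat \<Rightarrow> bool) set" and U :: "nat \<Rightarrow> gate"
  assumes "f2_subspace n A" and "f2_subspace n B"
    and "\<forall>a\<in>A. \<forall>b\<in>B. \<not> bdot n a b"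
    and "\<forall>i<n. U i \<in> {gI, gP, gHP, gPH, gPHP, gH}"
    and "logical_op n A B (local_op n U)"
  shows "\<forall>h \<in> {gate_set n U {gHP}, gate_set n U {gPH}, gate_set n U {gH}}.
           h \<noteq> {} \<and> h \<subset> {0..<n} \<longrightarrow> code_splits n A B h"
proof -
  have "code_splits n A B (gate_set n U {g})" if "g \<in> {gHP, gPH, gH}" for g
    unfolding code_splits_def
    using subspace_splits_if_brestrict_closed[OF assms(1) logical_brestrict_A[OF assms _ that]]
      subspace_splits_if_brestrict_closed[OF assms(2) logical_brestrict_B[OF assms _ that]]
    by blast
  then show ?thesis
    by blast
qed

end
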